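(* Let $h>0$, $n\in\mathbb{N}$, and let $\lambda:\mathbb{T}\to\mathbb{R}$ be an $n$-cycle with values $\lambda_0,\dots,\lambda_{n-1}\in\mathbb{R}\setminus\{\pm\tfrac1h\}$, such that $0<|e_{\lambda}(nh)|\neq1$ and $0<|e_{-\lambda}(nh)|\neq1$. Let $f:\mathbb{T}\to\mathbb{R}$ be arbitrary. Then the non-homogeneous equation $$\Delta_h^2 y(t)+\bigl[\Delta_h\lambda(t)-\lambda(t)\lambda(t+h)\bigr]y(t)=f(t),\qquad t\in\mathbb{T},$$ has Hyers–Ulam stability on $\mathbb{T}$ with Hyers–Ulam stability constant $L=K_0(\lambda)K_0(-\lambda)$.
   Context: Fix $h>0$ and let $\mathbb{T}=\{0,h,2h,3h,\dots\}$. For $x:\mathbb{T}\to\mathbb{R}$, $\Delta_h x(t)=\frac{x(t+h)-x(t)}{h}$ and $\Delta_h^2x=\Delta_h(\Delta_h x)$, $\Delta_h^3x=\Delta_h(\Delta_h^2 x)$. An $n$-cycle is a function $\mu:\mathbb{T}\to\mathbb{R}$ with $\mu(t)=\mu_k$ whenever $t/h\equiv k\pmod n$, $k\in\{0,\dots,n-1\}$, which has period $n$ and no smaller period. For such $\mu$ define the discrete exponential $e_\mu(t)=\prod_{k=0}^{t/h-1}(1+h\mu(kh))$ (empty product $=1$), so $e_\mu(nh)=\prod_{k=0}^{n-1}(1+h\mu_k)$. For $k\in\{0,\dots,n-1\}$ define $$S_k(\mu)=\sum_{j=1}^{n}\prod_{i=0}^{j-1}\frac{1}{|1+h\mu_{(k+i)\bmod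 n}|},$$ (e.g. $S_0(\mu)=\frac{1}{|1+h\mu_0|}+\frac{1}{|1+h\mu_0||1+h\mu_1|}+\dots+\frac{1}{|1+h\mu_0|\cdots|1+h\mu_{n-1}|}$), and, when $0<|e_\mu(nh)|\neq1$, $$K_0(\mu)=\frac{h|e_\mu(nh)|}{\bigl|1-|e_\mu(nh)|\bigr|}\max\{S_0(\mu),\dots,S_{n-1}(\mu)\}.$$ Here $-\lambda$ denotes the $n$-cycle with values $-\lambda_0,\dots,-\lambda_{n-1}$. Hyers–Ulam stability: an equation $\mathcal{L}[y](t)=f(t)$, $t\in\mathbb{T}$ (with $\mathcal{L}$ a linear difference operator) has Hyers–Ulam stability on $\mathbb{T}$ with Hyers–Ulam stability constant $K>0$ if for every $\varepsilon>0$ and every $\xi:\mathbb{T}\to\mathbb{R}$ with $|\mathcal{L}[\xi](t)-f(t)|\le\varepsilon$ for all $t\in\mathbb{T}$, there is a solution $y:\mathbb{T}\to\mathbb{R}$ of the equation with $|\xi(t)-y(t)|\le K\varepsilon$ for all $t\in\mathbb{T}$. The minimum Hyers–Ulam stability constant is the smallest such $K$. *)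

theory Defs
  imports "HOL-Analysis.Analysis"
begin

text \<open>A function x on T = {0,h,2h,...} is represented as a function on nat:
  x k stands for x(k h).\<close>

definition dlt :: "real \<Rightarrow> (nat \<Rightarrow> real) \<Rightarrow> nat \<Rightarrow> real" where
  "dlt h x k = (x (Suc k) - x k) / h"

definition is_cycle :: "nat \<Rightarrow> (nat \<Rightarrow> real) \<Rightarrow> bool" where
  "is_cycle n mu \<longleftrightarrow> n > 0 \<and> (\<forall>k. mu (k + n) = mu k) \<and>
     (\<forall>m. 0 < m \<and> m < n \<longrightarrow> \<not> (\<forall>k. mu (k + m) = mu k))"

text \<open>discrete exponential e_mu evaluated at time m h\<close>
definition dexp :: "real \<Rightarrow> (nat \<Rightarrow> real) \<Rightarrow> nat \<Rightarrow> real" where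
  "dexp h mu m = (\<Prod>k<m. (1 + h * mu k))"

definition Ssum :: "real \<Rightarrow> nat \<Rightarrow> (nat \<Rightarrow> real) \<Rightarrow> nat \<Rightarrow> real" where
  "Ssum h n mu k = (\<Sum>j=1..n. \<Prod>i<j. 1 / \<bar>1 + h * mu ((k + i) mod n)\<bar>)"

definition K0 :: "real \<Rightarrow> nat \<Rightarrow> (nat \<Rightarrow> real) \<Rightarrow> real" where
  "K0 h n mu = h * \<bar>dexp h mu n\<bar> / \<bar>1 - \<bar>dexp h mu n\<bar>\<bar> * Max {Ssum h n mu k | k. k < n}"

definition HU_stable :: "((nat \<Rightarrow> real) \<Rightarrow> nat \<Rightarrow> real) \<Rightarrow> (nat \<Rightarrow> real) \<Rightarrow> real \<Rightarrow> bool" where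
  "HU_stable L f K \<longleftrightarrow> K > 0 \<and>
     (\<forall>\<epsilon>>0. \<forall>\<xi>. (\<forall>t. \<bar>L \<xi> t - f t\<bar> \<le> \<epsilon>) \<longrightarrow>
        (\<exists>y. (\<forall>t. L y t = f t) \<and> (\<forall>t. \<bar>\<xi> t - y t\<bar> \<le> K * \<epsilon>)))"

end

theory Submission
  imports Defs
begin

text \<open>The operator factors as \<open>(\<Delta>\<^sub>h - \<lambda>(t + h)) (\<Delta>\<^sub>h + \<lambda>(t))\<close>, and Hyers-Ulam
  stability composes: if the outer factor is stable with constant \<open>K\<^sub>2\<close> and the inner one with
  constant \<open>K\<^sub>1\<close> for every right-hand side, the product is stable with \<open>K\<^sub>2 K\<^sub>1\<close>. So it
  suffices to treat \<open>\<Delta>\<^sub>h w = \<mu> w + q\<close> with an \<open>n\<close>-periodic \<open>\<mu>\<close>, \<open>1 + h \<mu> \<noteq> 0\<close>, whose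
  solutions are \<open>w(t) = h e\<^sub>\<mu>(t) (\<Sum>\<^bsub>s<t\<^esub> q(s) / e\<^sub>\<mu>(s + h) - c)\<close>.
  Since \<open>e\<^sub>\<mu>(t + n h) = e\<^sub>\<mu>(t) e\<^sub>\<mu>(n h)\<close>, the weights \<open>|e\<^sub>\<mu>(t) / e\<^sub>\<mu>(s + h)|\<close> over one period
  ahead of \<open>t\<close> add up to \<open>S\<^bsub>t mod n\<^esub>\<close>, and moving a window by one period scales them by
  \<open>|e\<^sub>\<mu>(n h)|\<^bsup>\<plusminus>1\<^esup>\<close>. If \<open>|e\<^sub>\<mu>(n h)| < 1\<close> take \<open>c = 0\<close>, so that only past weights occur; if
  \<open>|e\<^sub>\<mu>(n h)| > 1\<close> take \<open>c\<close> the full series, so that only future weights occur. Either way they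
  form a geometric series and \<open>|w| \<le> K\<^sub>0(\<mu>) \<epsilon>\<close>. The inner factor has \<open>\<mu> = -\<lambda>\<close>, the outer one
  \<open>\<mu> = \<lambda>(\<cdot> + h)\<close>, and a shift does not change \<open>K\<^sub>0\<close>.\<close>

lemma sum_lessThan_add:
  "(\<Sum>j<m + k. f j) = (\<Sum>j<m. f j) + (\<Sum>j<k. f (m + j))"
  for f :: "nat \<Rightarrow> 'a::comm_monoid_add"
  by (induction k) (simp_all add: add.assoc)

lemma dexp_add: "dexp h mu (s + t) = dexp h mu s * dexp h (\<lambda>i. mu (s + i)) t"
  by (induction t) (simp_all add: dexp_def)

lemma Ssum_mod: "Ssum h n mu (k mod n) = Ssum h n mu k"
  by (simp add: Ssum_def mod_add_left_eq)

lemma Ssum_set_eq_range: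
  assumes "0 < n"
  shows "{Ssum h n mu k | k. k < n} = range (Ssum h n mu)"
proof -
  have "Ssum h n mu k \<in> {Ssum h n mu k | k. k < n}" for k
    using assms Ssum_mod[of h n mu k] by (metis (mono_tags) mem_Collect_eq mod_less_divisor)
  then show ?thesis by blast
qed

lemma range_Suc_periodic:
  fixes f :: "nat \<Rightarrow> 'a"
  assumes "0 < n" and "\<And>k. f (k + n) = f k"
  shows "range (\<lambda>k. f (Suc k)) = range f"
proof -
  have "f k \<in> range (\<lambda>k. f (Suc k))" for k
  proof
    show "f k = f (Suc (k + n - 1))" using assms by simp
  qed simp
  then show ?thesis by blast
qed

lemma HU_stable_compose:
  assumes outer: "HU_stable L2 f K2" and inner: "\<And>g. HU_stable L1 g K1"
  shows "HU_stable (\<lambda>y. L2 (L1 y)) f (K2 * K1)"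
  unfolding HU_stable_def
proof (intro conjI allI impI)
  have "0 < K1" "0 < K2" using inner[of f] outer by (simp_all add: HU_stable_def)
  then show "0 < K2 * K1" by simp
  fix \<epsilon> :: real and \<xi> assume "0 < \<epsilon>" and "\<forall>t. \<bar>L2 (L1 \<xi>) t - f t\<bar> \<le> \<epsilon>"
  then obtain z where z: "\<forall>t. L2 z t = f t" and "\<forall>t. \<bar>L1 \<xi> t - z t\<bar> \<le> K2 * \<epsilon>"
    using outer unfolding HU_stable_def by blast
  moreover have "0 < K2 * \<epsilon>" using \<open>0 < K2\<close> \<open>0 < \<epsilon>\<close> by simp
  ultimately obtain y where "\<forall>t. L1 y t = z t" and y_close: "\<forall>t. \<bar>\<xi> t - y t\<bar> \<le> K1 * (K2 * \<epsilon>)"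
    using inner[of z] unfolding HU_stable_def by blast
  then have "L1 y = z" by blast
  then show "\<exists>y. (\<forall>t. L2 (L1 y) t = f t) \<and> (\<forall>t. \<bar>\<xi> t - y t\<bar> \<le> K2 * K1 * \<epsilon>)"
    using z y_close by (auto simp: ac_simps)
qed

lemma abs_sum_weighted_le:
  fixes a q :: "'a \<Rightarrow> real"
  assumes "\<And>j. \<bar>q j\<bar> \<le> \<epsilon>"
  shows "\<bar>\<Sum>j\<in>A. a j * q j\<bar> \<le> (\<Sum>j\<in>A. \<bar>a j\<bar>) * \<epsilon>"
proof -
  have "\<bar>\<Sum>j\<in>A. a j * q j\<bar> \<le> (\<Sum>j\<in>A. \<bar>a j\<bar> * \<bar>q j\<bar>)"
    by (rule order_trans[OF sum_abs]) (simp add: abs_mult)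
  also have "\<dots> \<le> (\<Sum>j\<in>A. \<bar>a j\<bar> * \<epsilon>)"
    by (intro sum_mono mult_left_mono assms) simp
  finally show ?thesis by (simp add: sum_distrib_right)
qed

lemma abs_suminf_weighted_le:
  fixes a q :: "nat \<Rightarrow> real"
  assumes "summable (\<lambda>j. \<bar>a j\<bar>)" and "\<And>j. \<bar>q j\<bar> \<le> \<epsilon>"
  shows "summable (\<lambda>j. a j * q j)" and "\<bar>\<Sum>j. a j * q j\<bar> \<le> (\<Sum>j. \<bar>a j\<bar>) * \<epsilon>"
proof -
  have bound: "norm (a j * q j) \<le> \<bar>a j\<bar> * \<epsilon>" for j
    using assms(2)[of j] by (simp add: abs_mult mult_left_mono)
  have summable: "summable (\<lambda>j. \<bar>a j\<bar> * \<epsilon>)"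
    using assms(1) by (rule summable_mult2)
  show "summable (\<lambda>j. a j * q j)"
    using summable bound by (rule summable_comparison_test')
  have "norm (\<Sum>j. a j * q j) \<le> (\<Sum>j. \<bar>a j\<bar> * \<epsilon>)"
    using bound summable by (rule norm_suminf_le)
  then show "\<bar>\<Sum>j. a j * q j\<bar> \<le> (\<Sum>j. \<bar>a j\<bar>) * \<epsilon>"
    using suminf_mult2[OF assms(1), of \<epsilon>] by simp
qed

locale periodic_coeff =
  fixes h :: real and n :: nat and mu :: "nat \<Rightarrow> real"
  assumes h_pos: "0 < h" and period_pos: "0 < n"
    and periodic: "\<And>k. mu (k + n) = mu k"
    and regressive: "\<And>k. 1 + h * mu k \<noteq> 0"
begin

abbreviation multiplier :: real where "multiplier \<equiv> \<bar>dexp h mu n\<bar>"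

abbreviation Smax :: real where "Smax \<equiv> Max {Ssum h n mu k | k. k < n}"

lemma mu_mod: "mu (k mod n) = mu k"
proof -
  have "mu (r + m * n) = mu r" for r m
  proof (induction m)
    case (Suc m)
    have "r + Suc m * n = (r + m * n) + n" by simp
    then show ?case using Suc periodic by metis
  qed simp
  then show ?thesis by (metis div_mult_mod_eq add.commute)
qed

lemma dexp_nonzero: "dexp h mu t \<noteq> 0"
  using regressive by (simp add: dexp_def)

lemma dexp_add_period: "dexp h mu (t + n) = dexp h mu t * dexp h mu n"
  by (induction t) (simp_all add: dexp_def periodic)

lemma dexp_period_ratio: "dexp h mu (s + n) / dexp h mu (r + n) = dexp h mu s / dexp h mu r"
  using dexp_nonzero[of n] by (simp add: dexp_add_period)

lemma Ssum_eq_window: "Ssum h n mu t = (\<Sum>j<n. \<bar>dexp h mu t / dexp h mu (t + Suc j)\<bar>)"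
proof -
  have "\<bar>dexp h mu t / dexp h mu (t + Suc j)\<bar> = (\<Prod>i<Suc j. 1 / \<bar>1 + h * mu ((t + i) mod n)\<bar>)"
    for j
  proof -
    have "\<bar>dexp h mu t / dexp h mu (t + Suc j)\<bar> = 1 / \<bar>dexp h (\<lambda>i. mu (t + i)) (Suc j)\<bar>"
      unfolding dexp_add using dexp_nonzero[of t] by (simp add: abs_mult)
    also have "\<dots> = (\<Prod>i<Suc j. 1 / \<bar>1 + h * mu ((t + i) mod n)\<bar>)"
      by (simp add: dexp_def mu_mod abs_prod prod_dividef del: prod.lessThan_Suc)
    finally show ?thesis .
  qed
  then show ?thesis
    by (simp add: Ssum_def sum.atLeast1_atMost_eq)
qed

lemma Ssum_le_Smax: "Ssum h n mu t \<le> Smax"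
proof (rule Max_ge)
  show "finite {Ssum h n mu k | k. k < n}" by simp
  show "Ssum h n mu t \<in> {Ssum h n mu k | k. k < n}"
    using period_pos by (simp add: Ssum_set_eq_range)
qed

lemma Smax_pos: "0 < Smax"
proof -
  have "0 < Ssum h n mu 0"
    unfolding Ssum_def using period_pos regressive by (intro sum_pos prod_pos) auto
  then show ?thesis using Ssum_le_Smax[of 0] by linarith
qed

lemma K0_pos: "multiplier \<noteq> 1 \<Longrightarrow> 0 < K0 h n mu"
  using h_pos Smax_pos dexp_nonzero[of n] by (simp add: K0_def)

lemma dexp_Suc_shift: "dexp h (\<lambda>k. mu (Suc k)) n = dexp h mu n"
proof -
  have "dexp h mu 1 * dexp h (\<lambda>k. mu (Suc k)) n = dexp h mu 1 * dexp h mu n"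
    using dexp_add[of h mu 1 n] dexp_add_period[of 1] by simp
  then show ?thesis using dexp_nonzero[of 1] by simp
qed

lemma K0_Suc_shift: "K0 h n (\<lambda>k. mu (Suc k)) = K0 h n mu"
proof -
  have Ssum_shift: "Ssum h n (\<lambda>k. mu (Suc k)) = (\<lambda>k. Ssum h n mu (Suc k))"
  proof
    fix k
    have "mu (Suc (x mod n)) = mu (Suc x)" for x
      by (metis mod_Suc_eq mu_mod)
    then show "Ssum h n (\<lambda>k. mu (Suc k)) k = Ssum h n mu (Suc k)"
      by (simp add: Ssum_def mu_mod)
  qed
  have Ssum_period: "Ssum h n mu (k + n) = Ssum h n mu k" for k
    by (metis Ssum_mod mod_add_self2)
  have "range (Ssum h n (\<lambda>k. mu (Suc k))) = range (Ssum h n mu)"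
    unfolding Ssum_shift by (rule range_Suc_periodic[where f = "Ssum h n mu", OF period_pos Ssum_period])
  then show ?thesis
    by (simp add: K0_def Ssum_set_eq_range[OF period_pos] dexp_Suc_shift)
qed

lemma contracting_past_sum_le:
  assumes "multiplier < 1"
  shows "(\<Sum>j<t. \<bar>dexp h mu t / dexp h mu (Suc j)\<bar>) \<le> multiplier * Smax / (1 - multiplier)"
proof -
  define V where "V t = (\<Sum>j<t. \<bar>dexp h mu t / dexp h mu (Suc j)\<bar>)" for t
  have "V t \<le> V (n + t)"
  proof -
    have "dexp h mu (n + t) / dexp h mu (Suc (n + j)) = dexp h mu t / dexp h mu (Suc j)" for j
      using dexp_period_ratio[of t "Suc j"] by (simp add: add.commute)
    then have "V (n + t) = (\<Sum>j<n. \<bar>dexp h mu (n + t) / dexp h mu (Suc j)\<bar>) + V t"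
      unfolding V_def sum_lessThan_add by simp
    then show ?thesis by (simp add: sum_nonneg)
  qed
  also have "\<dots> = (\<Sum>j<t. \<bar>dexp h mu (t + n) / dexp h mu (Suc j)\<bar>)
      + (\<Sum>j<n. \<bar>dexp h mu (t + n) / dexp h mu (t + Suc j)\<bar>)"
    unfolding V_def add.commute[of n t] by (simp add: sum_lessThan_add)
  also have "\<dots> = multiplier * V t + multiplier * Ssum h n mu t"
  proof -
    have "\<bar>dexp h mu (t + n)\<bar> = multiplier * \<bar>dexp h mu t\<bar>"
      by (simp add: dexp_add_period abs_mult)
    then show ?thesis by (simp add: V_def Ssum_eq_window sum_distrib_left)
  qed
  finally have "V t \<le> multiplier * V t + multiplier * Ssum h n mu t" .
  moreover have "multiplier * Ssum h n mu t \<le> multiplier * Smax"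
    by (intro mult_left_mono Ssum_le_Smax) simp
  ultimately have "V t * (1 - multiplier) \<le> multiplier * Smax"
    by (simp add: algebra_simps)
  moreover have "0 < 1 - multiplier" using assms by simp
  ultimately show ?thesis by (simp add: V_def pos_le_divide_eq)
qed

lemma expanding_future_sum:
  assumes "1 < multiplier"
  shows "summable (\<lambda>j. \<bar>dexp h mu t / dexp h mu (t + Suc j)\<bar>)" (is "summable ?U")
    and "(\<Sum>j. \<bar>dexp h mu t / dexp h mu (t + Suc j)\<bar>) \<le> multiplier * Smax / (multiplier - 1)"
proof -
  have partial: "(\<Sum>j<N. ?U j) \<le> multiplier * Smax / (multiplier - 1)" for N
  proof -
    have shift: "?U (n + j) = ?U j / multiplier" for j
    proof -
      have "dexp h mu (t + Suc (n + j)) = dexp h mu (t + Suc j) * dexp h mu n"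
        using dexp_add_period[of "t + Suc j"] by (simp add: ac_simps)
      then show ?thesis by (simp add: abs_mult)
    qed
    have "(\<Sum>j<n + N. ?U j) = Ssum h n mu t + (\<Sum>j<N. ?U j) / multiplier"
      unfolding sum_lessThan_add shift Ssum_eq_window by (simp only: sum_divide_distrib)
    moreover have "(\<Sum>j<N. ?U j) \<le> (\<Sum>j<n + N. ?U j)"
      by (rule sum_mono2) auto
    ultimately have "(\<Sum>j<N. ?U j) \<le> Ssum h n mu t + (\<Sum>j<N. ?U j) / multiplier"
      by linarith
    then have "(\<Sum>j<N. ?U j) * (multiplier - 1) \<le> multiplier * Ssum h n mu t"
      using assms by (simp add: field_simps)
    also have "\<dots> \<le> multiplier * Smax"
      by (intro mult_left_mono Ssum_le_Smax) simp
    finally show ?thesis using assms by (simp add: pos_le_divide_eq)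
  qed
  show "summable ?U"
    using partial by (intro summableI_nonneg_bounded) auto
  then show "suminf ?U \<le> multiplier * Smax / (multiplier - 1)"
    using partial by (rule suminf_le_const)
qed

lemma variation_of_constants:
  fixes q :: "nat \<Rightarrow> real" and c :: real
  defines "w \<equiv> \<lambda>t. h * dexp h mu t * ((\<Sum>j<t. q j / dexp h mu (Suc j)) - c)"
  shows "dlt h w t = mu t * w t + q t"
proof -
  let ?S = "(\<Sum>j<t. q j / dexp h mu (Suc j)) - c"
  have dexp_Suc: "dexp h mu (Suc t) = dexp h mu t * (1 + h * mu t)"
    by (simp add: dexp_def)
  have "w (Suc t) = h * dexp h mu (Suc t) * (?S + q t / dexp h mu (Suc t))"
    by (simp add: w_def)
  also have "\<dots> = (1 + h * mu t) * w t + h * q t"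
    using dexp_nonzero[of "Suc t"] unfolding dexp_Suc by (simp add: w_def field_simps)
  finally show ?thesis
    using h_pos by (simp add: dlt_def field_simps)
qed

lemma bounded_solution_contracting:
  assumes "multiplier < 1" and q_bound: "\<And>t. \<bar>q t\<bar> \<le> \<epsilon>"
  shows "\<exists>w. (\<forall>t. dlt h w t = mu t * w t + q t) \<and> (\<forall>t. \<bar>w t\<bar> \<le> K0 h n mu * \<epsilon>)"
proof (intro exI conjI allI)
  define w where "w t = h * dexp h mu t * (\<Sum>j<t. q j / dexp h mu (Suc j))" for t
  show "dlt h w t = mu t * w t + q t" for t
    using variation_of_constants[of q 0 t] by (simp add: w_def[abs_def])
  fix t
  have "w t = h * (\<Sum>j<t. dexp h mu t / dexp h mu (Suc j) * q j)"
    by (simp add: w_def sum_distrib_left ac_simps)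
  then have "\<bar>w t\<bar> = h * \<bar>\<Sum>j<t. dexp h mu t / dexp h mu (Suc j) * q j\<bar>"
    using h_pos by (simp only: abs_mult abs_of_pos)
  also have "\<dots> \<le> h * ((\<Sum>j<t. \<bar>dexp h mu t / dexp h mu (Suc j)\<bar>) * \<epsilon>)"
    using h_pos q_bound by (intro mult_left_mono abs_sum_weighted_le) auto
  also have "\<dots> \<le> h * (multiplier * Smax / (1 - multiplier) * \<epsilon>)"
    using h_pos q_bound[of 0] contracting_past_sum_le[OF assms(1)]
    by (intro mult_left_mono mult_right_mono) auto
  also have "\<dots> = K0 h n mu * \<epsilon>"
    using assms(1) by (simp add: K0_def)
  finally show "\<bar>w t\<bar> \<le> K0 h n mu * \<epsilon>" .
qed

lemma bounded_solution_expanding: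
  assumes "1 < multiplier" and q_bound: "\<And>t. \<bar>q t\<bar> \<le> \<epsilon>"
  shows "\<exists>w. (\<forall>t. dlt h w t = mu t * w t + q t) \<and> (\<forall>t. \<bar>w t\<bar> \<le> K0 h n mu * \<epsilon>)"
proof (intro exI conjI allI)
  define u where "u = (\<lambda>j. q j / dexp h mu (Suc j))"
  define w where "w t = h * dexp h mu t * ((\<Sum>j<t. u j) - (\<Sum>j. u j))" for t
  show "dlt h w t = mu t * w t + q t" for t
    unfolding w_def u_def by (rule variation_of_constants)
  have "summable (\<lambda>j. 1 / dexp h mu (Suc j) * q j)"
    using expanding_future_sum(1)[OF assms(1), of 0] q_bound
    by (intro abs_suminf_weighted_le(1)) (simp_all add: dexp_def)
  then have "summable u"
    by (simp add: u_def)
  fix t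
  have "w t = - h * (\<Sum>j. dexp h mu t * u (j + t))"
    using suminf_split_initial_segment[OF \<open>summable u\<close>, of t]
      suminf_mult[OF summable_ignore_initial_segment[OF \<open>summable u\<close>, of t], of "dexp h mu t"]
    by (simp add: w_def)
  also have "\<dots> = - h * (\<Sum>j. dexp h mu t / dexp h mu (t + Suc j) * q (t + j))"
    by (simp add: u_def add.commute)
  finally have "\<bar>w t\<bar> = h * \<bar>\<Sum>j. dexp h mu t / dexp h mu (t + Suc j) * q (t + j)\<bar>"
    using h_pos by (simp add: abs_mult)
  also have "\<dots> \<le> h * ((\<Sum>j. \<bar>dexp h mu t / dexp h mu (t + Suc j)\<bar>) * \<epsilon>)"
    using h_pos q_bound expanding_future_sum(1)[OF assms(1)]
    by (intro mult_left_mono abs_suminf_weighted_le(2)) auto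
  also have "\<dots> \<le> h * (multiplier * Smax / (multiplier - 1) * \<epsilon>)"
    using h_pos q_bound[of 0] expanding_future_sum(2)[OF assms(1)]
    by (intro mult_left_mono mult_right_mono) auto
  also have "\<dots> = K0 h n mu * \<epsilon>"
    using assms(1) by (simp add: K0_def)
  finally show "\<bar>w t\<bar> \<le> K0 h n mu * \<epsilon>" .
qed

lemma bounded_solution:
  assumes "multiplier \<noteq> 1" and "\<And>t. \<bar>q t\<bar> \<le> \<epsilon>"
  shows "\<exists>w. (\<forall>t. dlt h w t = mu t * w t + q t) \<and> (\<forall>t. \<bar>w t\<bar> \<le> K0 h n mu * \<epsilon>)"
  using assms bounded_solution_contracting bounded_solution_expanding
  by (cases "multiplier < 1") auto

lemma HU_stable_first_order:
  assumes "multiplier \<noteq> 1"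
  shows "HU_stable (\<lambda>y t. dlt h y t - mu t * y t) g (K0 h n mu)"
  unfolding HU_stable_def
proof (intro conjI allI impI)
  show "0 < K0 h n mu"
    using assms by (rule K0_pos)
  fix \<epsilon> :: real and \<xi> :: "nat \<Rightarrow> real"
  assume "\<forall>t. \<bar>dlt h \<xi> t - mu t * \<xi> t - g t\<bar> \<le> \<epsilon>"
  then obtain w where w: "\<forall>t. dlt h w t = mu t * w t + (dlt h \<xi> t - mu t * \<xi> t - g t)"
    and w_bound: "\<forall>t. \<bar>w t\<bar> \<le> K0 h n mu * \<epsilon>"
    using bounded_solution[OF assms, of "\<lambda>t. dlt h \<xi> t - mu t * \<xi> t - g t" \<epsilon>] by auto
  show "\<exists>y. (\<forall>t. dlt h y t - mu t * y t = g t) \<and> (\<forall>t. \<bar>\<xi> t - y t\<bar> \<le> K0 h n mu * \<epsilon>)"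
  proof (intro exI conjI allI)
    fix t
    show "dlt h (\<lambda>t. \<xi> t - w t) t - mu t * (\<xi> t - w t) = g t"
      using w[rule_format, of t] h_pos by (simp add: dlt_def field_simps)
    show "\<bar>\<xi> t - (\<xi> t - w t)\<bar> \<le> K0 h n mu * \<epsilon>"
      using w_bound by simp
  qed
qed

end

lemma dlt_factorization:
  assumes "h \<noteq> 0"
  shows "dlt h (dlt h y) t + (dlt h lam t - lam t * lam (Suc t)) * y t
    = dlt h (\<lambda>s. dlt h y s + lam s * y s) t - lam (Suc t) * (dlt h y t + lam t * y t)"
  using assms by (simp add: dlt_def field_simps)

theorem theorem3p4:
  fixes h :: real and n :: nat and lam f :: "nat \<Rightarrow> real"
  assumes "h > 0"
    and "is_cycle n lam"
    and "\<forall>k. lam k \<noteq> 1 / h \<and> lam k \<noteq> - (1 / h)"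
    and "0 < \<bar>dexp h lam n\<bar>" and "\<bar>dexp h lam n\<bar> \<noteq> 1"
    and "0 < \<bar>dexp h (\<lambda>k. - lam k) n\<bar>" and "\<bar>dexp h (\<lambda>k. - lam k) n\<bar> \<noteq> 1"
  shows "HU_stable
           (\<lambda>y t. dlt h (dlt h y) t + (dlt h lam t - lam t * lam (Suc t)) * y t) f
           (K0 h n lam * K0 h n (\<lambda>k. - lam k))"
proof -
  \<comment> \<open>Only the period of \<open>lam\<close> matters, not its minimality; and \<open>0 < |dexp \<dots>|\<close> holds anyway
    since no factor \<open>1 \<plusminus> h lam k\<close> vanishes.\<close>
  have "0 < n" and lam_periodic: "\<And>k. lam (k + n) = lam k"
    using assms(2) by (auto simp: is_cycle_def)
  have "h * lam k \<noteq> 1" and "h * lam k \<noteq> - 1" for k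
    using assms(1,3) by (auto simp: field_simps)
  then have regressive: "1 + h * lam k \<noteq> 0" and regressive_neg: "1 + h * - lam k \<noteq> 0" for k
    by (smt (verit) mult_minus_right)+
  interpret lam: periodic_coeff h n lam
    using assms(1) \<open>0 < n\<close> lam_periodic regressive by unfold_locales
  interpret neg: periodic_coeff h n "\<lambda>k. - lam k"
    using assms(1) \<open>0 < n\<close> lam_periodic regressive_neg by unfold_locales auto
  interpret shifted: periodic_coeff h n "\<lambda>k. lam (Suc k)"
    using assms(1) \<open>0 < n\<close> lam_periodic regressive by unfold_locales (simp_all flip: add_Suc)
  have outer: "HU_stable (\<lambda>z t. dlt h z t - lam (Suc t) * z t) f (K0 h n lam)"
    using shifted.HU_stable_first_order[of f] assms(5) lam.dexp_Suc_shift lam.K0_Suc_shift by simp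
  have inner: "HU_stable (\<lambda>y t. dlt h y t + lam t * y t) g (K0 h n (\<lambda>k. - lam k))" for g
    using neg.HU_stable_first_order[of g] assms(7) by simp
  show ?thesis
    using HU_stable_compose[OF outer inner] dlt_factorization[of h] assms(1) by simp
qed

end
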